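(* Let $g\ge0$, $n\ge0$ with $n+2g-2>0$, $K\ge2$ an integer, and $1\le\alpha_1,\dots,\alpha_n\le K-1$ integers. Define $$N^g_{\{\alpha\}}=\Big(\frac K2\Big)^{g-1}\sum_{\beta=1}^{K-1}\frac{\prod_{j=1}^n\sin(\pi\beta\alpha_j/K)}{\sin^{n+2g-2}(\pi\beta/K)}.$$ If $n+\sum_j\alpha_j$ is odd then $N^g_{\{\alpha\}}=0$. If $n+\sum_j\alpha_j$ is even then $$N^g_{\{\alpha\}}=-4\pi\Big(\frac K2\Big)^g\Bigg[\operatorname{Res}_{\phi=0}\frac{\prod_j\sin(2\pi\alpha_j\phi)}{\sin^{n+2g-2}(2\pi\phi)}\cot(2\pi K\phi)-\Big(\frac i2\Big)^{n-1}\sum_{\mu\in\{\pm1\}^n}\Big(\prod_j\mu_j\Big)\operatorname{sign}(A_\mu)\!\!\sum_{\substack{m\in\mathbb Z\\0\le m<|A_\mu|/(2K)}}\!\!\frac{1}{\sigma(m)}\operatorname{Res}_{\phi=0}\frac{\exp\big[2\pi i\phi\operatorname{sign}(A_\mu)(2Km-|A_\mu|)\big]}{\sin^{n+2g-2}(2\pi\phi)}\Bigg],$$ where $A_\mu=\sum_j\mu_j\alpha_j$.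
   Context: $N^g_{\{\alpha\}}$ is the Verlinde number (number of conformal blocks of the $SU(2)$ WZW model at level $k=K-2$ on a genus-$g$ surface with $n$ primary fields of dimensions $\alpha_j$). $\sigma(m)=2$ if $m=0$ and $1$ otherwise; $\operatorname{sign}(0)=0$; $\operatorname{Res}_{\phi=0}$ denotes the residue at $\phi=0$. *)

theory Defs
  imports "HOL-Complex_Analysis.Complex_Analysis"
begin

text \<open>Verlinde number N^g_{alpha} for SU(2) at level K-2; alpha indexed by 0..<n.\<close>
definition verlinde :: "nat \<Rightarrow> nat \<Rightarrow> nat \<Rightarrow> (nat \<Rightarrow> nat) \<Rightarrow> real" where
  "verlinde K g n \<alpha> =
     (real K / 2) powi (int g - 1) *
     (\<Sum>\<beta> = 1..K - 1.
        (\<Prod>j<n. sin (pi * real \<beta> * real (\<alpha> j) / real K)) /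
        sin (pi * real \<beta> / real K) ^ (n + 2 * g - 2))"

definition sigma_m :: "int \<Rightarrow> complex" where
  "sigma_m m = (if m = 0 then 2 else 1)"

end

theory Submission
  imports Defs "HOL-Real_Asymp.Real_Asymp"
begin

text \<open>
  Fix \<open>p = n + 2g - 2\<close>. Writing each sine as a difference of exponentials expands both the
  Verlinde sum and the residue at 0 as sums over sign vectors \<open>\<mu>\<close>, and for each \<open>\<mu>\<close> with
  \<open>A = \<Sum>\<^sub>j \<mu>\<^sub>j \<alpha>\<^sub>j\<close> the terms are residues of the single kernel
  \<open>F(w) = (exp (-2 pi i A w) cot (2 pi K w) + 2 i sgn(A) Q(w)) / sin (2 pi w) ^ p\<close>.
  The trigonometric polynomial \<open>Q\<close> cancels the Fourier modes of \<open>exp (-2 pi i A w) cot (2 pi K w)\<close>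
  that grow as \<open>\<bar>Im w\<bar> \<rightarrow> \<infinity>\<close>, so \<open>F\<close> decays like \<open>exp (-2 pi \<bar>Im w\<bar>)\<close>; since
  \<open>A + p\<close> is even, \<open>F\<close> also has period 1/2. Integrating \<open>F\<close> over the boundary of a tall
  period rectangle, the vertical sides cancel and the horizontal ones vanish in the limit, so the
  residues of \<open>F\<close> in one period sum to zero. The residues at \<open>\<beta>/(2K)\<close>, \<open>0 < \<beta> < K\<close>, are the
  Verlinde summands and the residue at 0 is the bracket of the formula. The odd case is the
  antisymmetry of the summands under \<open>\<beta> \<mapsto> K - \<beta>\<close>.
\<close>

section \<open>Residues\<close>

lemma residue_sum:
  assumes "open S" "z \<in> S" "finite I" "\<And>i. i \<in> I \<Longrightarrow> f i holomorphic_on S - {z}"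
  shows "residue (\<lambda>w. \<Sum>i\<in>I. c i * f i w) z = (\<Sum>i\<in>I. c i * residue (f i) z)"
  using assms(3,4)
proof (induction I rule: finite_induct)
  case empty
  then show ?case by (simp add: residue_const)
next
  case (insert i I)
  then have "residue (\<lambda>w. \<Sum>i\<in>insert i I. c i * f i w) z =
      residue (\<lambda>w. c i * f i w) z + residue (\<lambda>w. \<Sum>i\<in>I. c i * f i w) z"
    by (simp add: residue_add[OF assms(1,2)] holomorphic_intros)
  with insert show ?case
    by (simp add: residue_lmul[OF assms(1,2)])
qed

lemma contour_integral_rectpath_periodic:
  fixes f :: "complex \<Rightarrow> complex" and a1 a3 :: complex
  defines "a2 \<equiv> Complex (Re a3) (Im a1)" and "a4 \<equiv> Complex (Re a1) (Im a3)"
  assumes periodic: "\<And>w. f (w + of_real (Re a3 - Re a1)) = f w"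
    and cont: "continuous_on (path_image (rectpath a1 a3)) f"
  shows "contour_integral (rectpath a1 a3) f =
           contour_integral (linepath a1 a2) f + contour_integral (linepath a3 a4) f"
proof -
  have sides: "path_image (rectpath a1 a3) =
      closed_segment a1 a2 \<union> closed_segment a2 a3 \<union> closed_segment a3 a4 \<union> closed_segment a4 a1"
    by (simp add: rectpath_def Let_def path_image_join a2_def a4_def Un_assoc)
  have "f contour_integrable_on linepath a1 a2" "f contour_integrable_on linepath a2 a3"
       "f contour_integrable_on linepath a3 a4" "f contour_integrable_on linepath a4 a1"
    using cont unfolding sides
    by (auto intro!: contour_integrable_continuous_linepath elim: continuous_on_subset)
  then have "contour_integral (rectpath a1 a3) f =
      contour_integral (linepath a1 a2) f + contour_integral (linepath a2 a3) f +
      contour_integral (linepath a3 a4) f + contour_integral (linepath a4 a1) f"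
    by (simp add: rectpath_def Let_def contour_integrable_joinI add_ac flip: a2_def a4_def)
  moreover have "contour_integral (linepath a2 a3) f = - contour_integral (linepath a4 a1) f"
  proof -
    have "linepath a2 a3 = (+) (of_real (Re a3 - Re a1)) \<circ> linepath a1 a4"
      unfolding linepath_translate a2_def a4_def
      by (intro arg_cong2[where f = linepath]) (simp_all add: complex_eq_iff)
    then have "contour_integral (linepath a2 a3) f = contour_integral (linepath a1 a4) f"
      by (simp only: contour_integral_translate periodic)
    also have "\<dots> = - contour_integral (linepath a4 a1) f"
      by (metis contour_integral_reversepath reversepath_linepath valid_path_linepath)
    finally show ?thesis .
  qed
  ultimately show ?thesis by simp
qed

lemma contour_integral_rectpath_eq_residue_sum:
  assumes "open S" "convex S" "finite pts" "f holomorphic_on S - pts"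
    and "Re a1 \<le> Re a3" "Im a1 \<le> Im a3" "cbox a1 a3 \<subseteq> S" "pts \<subseteq> box a1 a3"
  shows "contour_integral (rectpath a1 a3) f = 2 * pi * \<i> * (\<Sum>q\<in>pts. residue f q)"
proof -
  have "path_image (rectpath a1 a3) \<subseteq> S - pts"
    using path_image_rectpath_cbox_minus_box[OF assms(5,6)] assms(7,8) by auto
  then have "contour_integral (rectpath a1 a3) f =
      2 * pi * \<i> * (\<Sum>q\<in>pts. winding_number (rectpath a1 a3) q * residue f q)"
    using assms(7) winding_number_rectpath_outside[OF assms(5,6)]
    by (intro Residue_theorem[OF assms(1) convex_connected[OF assms(2)] assms(3,4)]) auto
  also have "\<dots> = 2 * pi * \<i> * (\<Sum>q\<in>pts. residue f q)"
    using assms(8) winding_number_rectpath by (intro arg_cong[where f = "(*) _"] sum.cong) auto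
  finally show ?thesis .
qed

lemma norm_residue_sum_le_if_periodic:
  fixes f :: "complex \<Rightarrow> complex"
  assumes "T > 0" "Y > 0" "open S" "convex S" "finite pts"
    and holo: "f holomorphic_on S - pts"
    and strip: "\<And>w. a \<le> Re w \<Longrightarrow> Re w \<le> a + T \<Longrightarrow> w \<in> S"
    and pts: "\<And>q. q \<in> pts \<Longrightarrow> a < Re q \<and> Re q < a + T \<and> \<bar>Im q\<bar> < Y"
    and periodic: "\<And>w. f (w + of_real T) = f w"
    and bound: "\<And>w. \<bar>Im w\<bar> = Y \<Longrightarrow> norm (f w) \<le> C"
  shows "pi * norm (\<Sum>q\<in>pts. residue f q) \<le> T * C"
proof -
  define a1 a3 where "a1 = Complex a (- Y)" and "a3 = Complex (a + T) Y"
  define a2 a4 where "a2 = Complex (Re a3) (Im a1)" and "a4 = Complex (Re a1) (Im a3)"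
  have le: "Re a1 \<le> Re a3" "Im a1 \<le> Im a3"
    using assms(1,2) by (simp_all add: a1_def a3_def)
  have cbox: "cbox a1 a3 \<subseteq> S"
    using strip by (auto simp: in_cbox_complex_iff a1_def a3_def)
  have "pts \<subseteq> box a1 a3"
    using pts by (force simp: in_box_complex_iff a1_def a3_def)
  then have "path_image (rectpath a1 a3) \<subseteq> S - pts"
    using path_image_rectpath_cbox_minus_box[OF le] cbox by auto
  then have cont: "continuous_on (path_image (rectpath a1 a3)) f"
    using holomorphic_on_imp_continuous_on[OF holo] by (rule continuous_on_subset[rotated])
  have "2 * pi * \<i> * (\<Sum>q\<in>pts. residue f q) =
      contour_integral (linepath a1 a2) f + contour_integral (linepath a3 a4) f"
    unfolding a2_def a4_def
    using contour_integral_rectpath_eq_residue_sum[OF assms(3-5) holo le cbox \<open>pts \<subseteq> box a1 a3\<close>]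
      contour_integral_rectpath_periodic[of f a3 a1] periodic cont
    by (simp add: a1_def a3_def)
  then have "norm (contour_integral (linepath a1 a2) f + contour_integral (linepath a3 a4) f) =
      norm (2 * pi * \<i> * (\<Sum>q\<in>pts. residue f q))"
    by simp
  then have "2 * pi * norm (\<Sum>q\<in>pts. residue f q) =
      norm (contour_integral (linepath a1 a2) f + contour_integral (linepath a3 a4) f)"
    by (simp add: norm_mult)
  have "norm (f (Complex 0 Y)) \<le> C"
    using bound assms(2) by simp
  then have "0 \<le> C"
    by (meson norm_ge_zero order_trans)
  have "norm (contour_integral (linepath a1 a2) f + contour_integral (linepath a3 a4) f) \<le> C * T + C * T"
  proof (intro norm_triangle_le add_mono contour_integral_bound_linepath[THEN order_trans])
    have "closed_segment a1 a2 \<union> closed_segment a3 a4 \<subseteq> path_image (rectpath a1 a3)"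
      by (auto simp: rectpath_def Let_def path_image_join a2_def a4_def)
    then show "f contour_integrable_on linepath a1 a2" "f contour_integrable_on linepath a3 a4"
      using cont by (auto intro!: contour_integrable_continuous_linepath elim: continuous_on_subset)
    show "norm (f x) \<le> C" if "x \<in> closed_segment a1 a2" for x
      using that bound[of x] assms(2) by (auto simp: closed_segment_same_Im a1_def a2_def a3_def)
    show "norm (f x) \<le> C" if "x \<in> closed_segment a3 a4" for x
      using that bound[of x] assms(2) by (auto simp: closed_segment_same_Im a1_def a3_def a4_def)
  qed (use assms(1) \<open>0 \<le> C\<close> in \<open>simp_all add: a1_def a2_def a3_def a4_def cmod_def\<close>)
  with \<open>2 * pi * norm (\<Sum>q\<in>pts. residue f q) = _\<close> show ?thesis
    by (simp add: mult.commute)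
qed

lemma residue_sum_eq_0_if_periodic_decaying:
  fixes f :: "complex \<Rightarrow> complex" and B :: "real \<Rightarrow> real"
  assumes "T > 0" "open S" "convex S" "finite pts"
    and holo: "f holomorphic_on S - pts"
    and strip: "\<And>w. a \<le> Re w \<Longrightarrow> Re w \<le> a + T \<Longrightarrow> w \<in> S"
    and pts: "\<And>q. q \<in> pts \<Longrightarrow> a < Re q \<and> Re q < a + T \<and> \<bar>Im q\<bar> < Y\<^sub>0"
    and periodic: "\<And>w. f (w + of_real T) = f w"
    and decay: "\<And>w. Y\<^sub>0 \<le> \<bar>Im w\<bar> \<Longrightarrow> norm (f w) \<le> B \<bar>Im w\<bar>"
    and B: "(B \<longlongrightarrow> 0) at_top"
  shows "(\<Sum>q\<in>pts. residue f q) = 0"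
proof -
  have "pi * norm (\<Sum>q\<in>pts. residue f q) \<le> 0"
  proof (rule tendsto_le[OF trivial_limit_at_top_linorder])
    show "((\<lambda>Y. T * B Y) \<longlongrightarrow> 0) at_top"
      using tendsto_mult_right_zero[OF B] .
    show "\<forall>\<^sub>F Y in at_top. pi * norm (\<Sum>q\<in>pts. residue f q) \<le> T * B Y"
      using eventually_ge_at_top[of "max Y\<^sub>0 1"]
    proof eventually_elim
      case (elim Y)
      then have "Y > 0" "Y\<^sub>0 \<le> Y"
        by auto
      show ?case
      proof (rule norm_residue_sum_le_if_periodic[OF assms(1) \<open>Y > 0\<close> assms(2-4) holo strip _ periodic])
        show "a < Re q \<and> Re q < a + T \<and> \<bar>Im q\<bar> < Y" if "q \<in> pts" for q
          using pts[OF that] \<open>Y\<^sub>0 \<le> Y\<close> by auto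
        show "norm (f w) \<le> B Y" if "\<bar>Im w\<bar> = Y" for w
          using decay[of w] that \<open>Y\<^sub>0 \<le> Y\<close> by simp
      qed
    qed
  qed simp
  then show ?thesis
    using pi_gt_zero by (simp add: mult_le_0_iff)
qed

lemma residue_mult_cot:
  fixes f :: "complex \<Rightarrow> complex"
  assumes "open B" "connected B" "z \<in> B" "f holomorphic_on B" "f z \<noteq> 0" "c \<noteq> 0" "sin (c * z) = 0"
  shows "residue (\<lambda>w. f w * cot (c * w)) z = f z / c"
proof -
  have "cos (c * z) \<noteq> 0"
    using sin_cos_squared_add[of "c * z"] assms(7) by auto
  have "residue (\<lambda>w. f w * cos (c * w) / sin (c * w)) z = f z * cos (c * z) / (cos (c * z) * c)"
    using assms \<open>cos (c * z) \<noteq> 0\<close>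
    by (intro residue_simple_pole_deriv[OF _ _ assms(1-3)] holomorphic_intros derivative_eq_intros) auto
  then show ?thesis
    using \<open>cos (c * z) \<noteq> 0\<close> by (simp add: cot_def times_divide_eq_right)
qed

section \<open>Trigonometric identities and estimates\<close>

lemma exp_pi_i_int: "exp (of_real pi * \<i> * of_int k) = (if even k then 1 else - 1)"
proof (cases "even k")
  case True
  then obtain j where "k = 2 * j" by blast
  then have "exp (of_real pi * \<i> * of_int k) = exp (\<i> * (of_int j * (of_real pi * 2)))"
    by (simp add: mult_ac)
  with True show ?thesis by simp
next
  case False
  then obtain j where "k = 2 * j + 1" by (metis oddE)
  then have "exp (of_real pi * \<i> * of_int k) = exp (\<i> * (of_int j * (of_real pi * 2)) + of_real pi * \<i>)"
    by (simp add: algebra_simps)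
  also have "\<dots> = exp (\<i> * (of_int j * (of_real pi * 2))) * exp (of_real pi * \<i>)"
    by (rule exp_add)
  finally show ?thesis using False by simp
qed

lemma cot_add_pi: "cot (z + of_real pi) = cot (z::complex)"
  by (simp add: cot_def sin_add cos_add)

lemma cot_add_nat_pi: "cot (z + of_nat k * of_real pi) = cot (z::complex)"
proof (induction k)
  case (Suc k)
  have "z + of_nat (Suc k) * of_real pi = (z + of_nat k * of_real pi) + of_real pi"
    by (simp add: algebra_simps)
  then show ?case
    using Suc by (simp only: cot_add_pi)
qed simp

lemma cot_conv_exp: "cot z = \<i> * (exp (2 * \<i> * z) + 1) / (exp (2 * \<i> * z) - 1)"
proof -
  define E where "E = exp (\<i> * z)"
  have "E \<noteq> 0"
    by (simp add: E_def)
  have E2: "exp (2 * \<i> * z) = E * E"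
    by (simp add: E_def mult.assoc flip: exp_add)
  have inv: "exp (- (\<i> * z)) = inverse E"
    by (simp add: E_def exp_minus)
  show ?thesis
  proof (cases "E * E = 1")
    case True
    then have "sin z = 0"
      using \<open>E \<noteq> 0\<close> by (simp add: sin_exp_eq inv field_simps flip: E_def)
    then show ?thesis
      using True by (simp add: cot_def E2)
  next
    case False
    then have "E - inverse E \<noteq> 0"
      using \<open>E \<noteq> 0\<close> by (simp add: field_simps)
    then have "cot z = \<i> * (E * E + 1) / (E * E - 1)"
      using \<open>E \<noteq> 0\<close> False
      by (simp add: cot_def sin_exp_eq cos_exp_eq inv field_simps flip: E_def)
    then show ?thesis
      by (simp only: E2)
  qed
qed

lemma norm_sin_ge: "(exp \<bar>Im z\<bar> - 1) / 2 \<le> norm (sin z)"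
proof -
  have "\<bar>exp (- Im z) - exp (Im z)\<bar> \<le> norm (exp (\<i> * z) - exp (- (\<i> * z)))"
    using norm_triangle_ineq3[of "exp (\<i> * z)" "exp (- (\<i> * z))"] by (simp add: norm_exp_eq_Re)
  moreover have "exp \<bar>Im z\<bar> - 1 \<le> \<bar>exp (- Im z) - exp (Im z)\<bar>"
    by (cases "Im z \<ge> 0") auto
  ultimately show ?thesis
    by (simp add: sin_exp_eq norm_divide norm_mult)
qed

lemma prod_sin_eq_sum_sign_vectors:
  fixes x :: "nat \<Rightarrow> complex"
  shows "(\<Prod>j<n. sin (x j)) = (\<i> / 2) ^ n *
     (\<Sum>\<mu>\<in>{0..<n} \<rightarrow>\<^sub>E {-1, 1::int}. of_int (\<Prod>j<n. \<mu> j) * exp (- (\<i> * (\<Sum>j<n. of_int (\<mu> j) * x j))))"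
proof -
  have sin: "sin y = \<i> / 2 * (\<Sum>e\<in>{-1, 1::int}. of_int e * exp (- (\<i> * (of_int e * y))))" for y :: complex
    by (simp add: sin_exp_eq' field_simps)
  have "(\<Prod>j<n. sin (x j)) = (\<Prod>j<n. \<i> / 2 * (\<Sum>e\<in>{-1, 1::int}. of_int e * exp (- (\<i> * (of_int e * x j)))))"
    by (simp only: sin)
  also have "\<dots> = (\<i> / 2) ^ n * (\<Prod>j<n. \<Sum>e\<in>{-1, 1::int}. of_int e * exp (- (\<i> * (of_int e * x j))))"
    by (simp only: prod.distrib prod_constant card_lessThan)
  also have "(\<Prod>j<n. \<Sum>e\<in>{-1, 1::int}. of_int e * exp (- (\<i> * (of_int e * x j)))) =
      (\<Sum>\<mu>\<in>{..<n} \<rightarrow>\<^sub>E {-1, 1::int}. \<Prod>j<n. of_int (\<mu> j) * exp (- (\<i> * (of_int (\<mu> j) * x j))))"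
    by (rule prod_sum_PiE) auto
  also have "\<dots> = (\<Sum>\<mu>\<in>{0..<n} \<rightarrow>\<^sub>E {-1, 1::int}.
      of_int (\<Prod>j<n. \<mu> j) * exp (- (\<i> * (\<Sum>j<n. of_int (\<mu> j) * x j))))"
    by (simp add: atLeast0LessThan prod.distrib sum_distrib_left exp_sum sum_negf[symmetric] flip: exp_sum)
  finally show ?thesis .
qed

lemma even_signed_sum_iff:
  fixes a :: "nat \<Rightarrow> int"
  assumes "\<And>j. j < n \<Longrightarrow> \<mu> j \<in> {-1, 1}"
  shows "even (\<Sum>j<n. \<mu> j * a j) \<longleftrightarrow> even (\<Sum>j<n. a j)"
proof -
  have "even (\<mu> j * a j - a j)" if "j < n" for j
    using assms[OF that] by (auto simp: algebra_simps)
  then have "even (\<Sum>j<n. \<mu> j * a j - a j)"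
    by (intro dvd_sum) simp
  then show ?thesis
    by (simp add: sum_subtractf even_diff)
qed

definition sin_power :: "nat \<Rightarrow> complex \<Rightarrow> complex" where
  "sin_power p w = sin (2 * of_real pi * w) ^ p"

definition half_lattice :: "nat \<Rightarrow> complex set" where
  "half_lattice K = range (\<lambda>k::int. of_int k / (2 * of_nat K))"

lemma sin_2pi_mult_eq_0_iff:
  assumes "K > 0"
  shows "sin (2 * of_real pi * of_nat K * w) = 0 \<longleftrightarrow> w \<in> half_lattice K"
proof -
  have "2 * of_real pi * of_nat K * w = of_real (of_int k * pi) \<longleftrightarrow> w = of_int k / (2 * of_nat K)"
    for k :: int
    using assms pi_gt_zero by (auto simp: field_simps)
  then show ?thesis
    by (auto simp: sin_eq_0 half_lattice_def)
qed

lemma sin_2pi_eq_0_iff: "sin (2 * of_real pi * (w::complex)) = 0 \<longleftrightarrow> (\<exists>j::int. w = of_int j / 2)"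
  using sin_2pi_mult_eq_0_iff[of 1 w] by (simp add: half_lattice_def image_iff)

lemma sin_power_eq_0_imp_half_lattice:
  assumes "K > 0" "sin_power p w = 0"
  shows "w \<in> half_lattice K"
proof -
  from assms(2) obtain j :: int where "w = of_int j / 2"
    by (auto simp: sin_power_def sin_2pi_eq_0_iff)
  then have "w = of_int (j * int K) / (2 * of_nat K)"
    using assms(1) by (simp add: field_simps)
  then show ?thesis
    unfolding half_lattice_def by blast
qed

lemma ball_inter_half_lattice:
  assumes "K > 0"
  shows "ball (of_int k / (2 * of_nat K)) (1 / (2 * real K)) \<inter> half_lattice K =
           {of_int k / (2 * of_nat K)}"
proof -
  have "k' = k" if "dist (of_int k / (2 * of_nat K)) (of_int k' / (2 * of_nat K) :: complex) < 1 / (2 * real K)"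
    for k' :: int
  proof -
    have "of_int k / (2 * of_nat K) - of_int k' / (2 * of_nat K) =
        (of_real (of_int (k - k') / (2 * real K)) :: complex)"
      by (simp add: diff_divide_distrib)
    then have "\<bar>of_int (k - k')\<bar> / (2 * real K) < 1 / (2 * real K)"
      using that by (simp add: dist_norm del: of_real_divide of_int_diff)
    then have "\<bar>k - k'\<bar> < 1"
      using assms by (simp add: divide_less_cancel)
    then show ?thesis by simp
  qed
  then show ?thesis
    using assms by (auto simp: half_lattice_def)
qed

lemma punctured_ball_subset_Compl_half_lattice:
  assumes "K > 0"
  shows "ball (of_int k / (2 * of_nat K)) (1 / (2 * real K)) - {of_int k / (2 * of_nat K)}
           \<subseteq> - half_lattice K"
  using ball_inter_half_lattice[OF assms, of k] by blast

lemma half_lattice_in_strip: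
  assumes "K > 0" "w \<in> half_lattice K" "- 1 / (2 * real K) < Re w" "Re w < 1/2"
  shows "w \<in> (\<lambda>k. of_nat k / (2 * of_nat K)) ` {..<K}"
proof -
  obtain k :: int where k: "w = of_int k / (2 * of_nat K)"
    using assms(2) by (auto simp: half_lattice_def)
  then have Re: "Re w = of_int k / (2 * real K)"
    by (simp add: Re_divide_of_nat[of "of_int k" "2 * K", simplified])
  then have "- 1 < real_of_int k"
    using assms(1,3) by (simp add: field_simps)
  have "real_of_int k / (2 * real K) < 1/2"
    using assms(4) Re by simp
  then have "real_of_int k < real K"
    using assms(1) by (simp add: divide_less_eq)
  then have "w = of_nat (nat k) / (2 * of_nat K)" "nat k < K"
    using k \<open>- 1 < real_of_int k\<close> by simp_all
  then show ?thesis
    by blast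
qed

lemma sin_power_add_half: "sin_power p (w + 1/2) = (-1) ^ p * sin_power p w"
proof -
  have "sin (2 * of_real pi * (w + 1/2)) = - sin (2 * of_real pi * w)"
    using sin_add[of "2 * of_real pi * w" "of_real pi"] by (simp add: algebra_simps)
  then show ?thesis
    by (simp only: sin_power_def power_minus[of "sin (2 * of_real pi * w)"])
qed

lemma sin_power_uminus: "sin_power p (- w) = (-1) ^ p * sin_power p w"
proof -
  have "sin (2 * of_real pi * - w) = - sin (2 * of_real pi * w)"
    by simp
  then show ?thesis
    by (simp only: sin_power_def power_minus[of "sin (2 * of_real pi * w)"])
qed

lemma holomorphic_on_div_sin_power:
  assumes "K > 0" "f holomorphic_on - half_lattice K"
  shows "(\<lambda>w. f w / sin_power p w) holomorphic_on - half_lattice K"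
proof -
  have "sin_power p holomorphic_on - half_lattice K"
    unfolding sin_power_def by (intro holomorphic_intros)
  then show ?thesis
    using sin_power_eq_0_imp_half_lattice[OF assms(1)] by (intro holomorphic_on_divide assms(2)) auto
qed

lemma sin_power_neq_0_near_pole:
  assumes "K > 0" "0 < \<beta>" "\<beta> < K" "w \<in> ball (of_nat \<beta> / (2 * of_nat K)) (1 / (2 * real K))"
  shows "sin_power p w \<noteq> 0"
proof
  assume "sin_power p w = 0"
  then have "w \<in> half_lattice K"
    by (rule sin_power_eq_0_imp_half_lattice[OF assms(1)])
  moreover have "ball (of_nat \<beta> / (2 * of_nat K)) (1 / (2 * real K)) \<inter> half_lattice K =
      {of_nat \<beta> / (2 * of_nat K)}"
    using ball_inter_half_lattice[OF assms(1), of "int \<beta>"] by simp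
  ultimately have "w = of_nat \<beta> / (2 * of_nat K)"
    using assms(4) by blast
  moreover obtain j :: int where "w = of_int j / 2"
    using \<open>sin_power p w = 0\<close> by (auto simp: sin_power_def sin_2pi_eq_0_iff)
  ultimately have "(of_int (int \<beta>) :: complex) = of_int (j * int K)"
    using assms(1) by (simp add: field_simps)
  then have \<beta>: "int \<beta> = j * int K"
    by (simp only: of_int_eq_iff)
  show False
  proof (cases "j \<le> 0")
    case True
    then have "j * int K \<le> 0"
      by (simp add: mult_nonpos_nonneg)
    with \<beta> assms(2) show False by linarith
  next
    case False
    then have "1 * int K \<le> j * int K"
      by (intro mult_right_mono) auto
    with \<beta> assms(3) show False by linarith
  qed
qed

lemma norm_sin_2pi_ge:
  assumes "Im w \<ge> 1"
  shows "exp (2 * pi * Im w) / 4 \<le> norm (sin (2 * of_real pi * w))"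
proof -
  have "2 \<le> 1 + 2 * pi * Im w"
    using assms pi_gt3 by (smt (verit) mult_le_cancel_left1)
  also have "\<dots> \<le> exp (2 * pi * Im w)"
    by (rule exp_ge_add_one_self)
  finally have "exp (2 * pi * Im w) / 4 \<le> (exp \<bar>Im (2 * of_real pi * w)\<bar> - 1) / 2"
    using assms by simp
  also have "\<dots> \<le> norm (sin (2 * of_real pi * w))"
    by (rule norm_sin_ge)
  finally show ?thesis .
qed

lemma norm_div_sin_power_le:
  assumes "Im w \<ge> 1" "p \<ge> 1"
  shows "norm (z / sin_power p w) \<le> norm z * 4 ^ p * exp (- 2 * pi * Im w)"
proof -
  define y where "y = exp (2 * pi * Im w)"
  have "y > 0" "1 \<le> y"
    using assms(1) by (simp_all add: y_def)
  have "(y / 4) ^ p \<le> norm (sin (2 * of_real pi * w)) ^ p"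
    using norm_sin_2pi_ge[OF assms(1)] \<open>y > 0\<close> by (intro power_mono) (simp_all add: y_def)
  moreover have "0 < (y / 4) ^ p"
    using \<open>y > 0\<close> by simp
  ultimately have "norm z / norm (sin (2 * of_real pi * w)) ^ p \<le> norm z / (y / 4) ^ p"
    by (intro divide_left_mono) auto
  then have "norm (z / sin_power p w) \<le> norm z / (y / 4) ^ p"
    by (simp add: sin_power_def norm_divide norm_power)
  also have "\<dots> = norm z * 4 ^ p / y ^ p"
    by (simp add: power_divide)
  also have "\<dots> \<le> norm z * 4 ^ p / y"
  proof -
    have "y \<le> y ^ p"
      using power_increasing[of 1 p y] \<open>1 \<le> y\<close> assms(2) by simp
    then show ?thesis
      using \<open>y > 0\<close> by (intro divide_left_mono) auto
  qed
  also have "\<dots> = norm z * 4 ^ p * exp (- 2 * pi * Im w)"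
    by (simp add: y_def exp_minus field_simps)
  finally show ?thesis .
qed

lemma norm_exp_4piKw_le:
  assumes "K > 0" "Im w \<ge> 1"
  shows "norm (exp (2 * \<i> * (2 * of_real pi * of_nat K * w))) \<le> 1/2"
proof -
  have "1 \<le> real K"
    using assms(1) by simp
  then have "1 \<le> real K * Im w"
    using assms(2) mult_mono[of 1 "real K" 1 "Im w"] by simp
  then have "1 \<le> 4 * pi * real K * Im w"
    using pi_gt3 by (smt (verit) mult_le_cancel_right1 mult.assoc)
  then have "2 \<le> exp (4 * pi * real K * Im w)"
    using exp_ge_add_one_self[of "4 * pi * real K * Im w"] by linarith
  then show ?thesis
    by (simp add: norm_exp_eq_Re exp_minus field_simps)
qed

lemma norm_cot_2piKw_le:
  assumes "K > 0" "Im w \<ge> 1"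
  shows "norm (cot (2 * of_real pi * of_nat K * w)) \<le> 3"
proof -
  define u where "u = exp (2 * \<i> * (2 * of_real pi * of_nat K * w))"
  have "norm u \<le> 1/2"
    unfolding u_def by (rule norm_exp_4piKw_le[OF assms])
  then have "norm (u + 1) \<le> 3/2" "1/2 \<le> norm (u - 1)"
    using norm_triangle_ineq[of u 1] norm_triangle_ineq2[of 1 u] by (simp_all add: norm_minus_commute)
  then have "norm (u + 1) / norm (u - 1) \<le> (3/2) / (1/2)"
    by (intro frac_le) auto
  moreover have "cot (2 * of_real pi * of_nat K * w) = \<i> * (u + 1) / (u - 1)"
    unfolding u_def by (rule cot_conv_exp)
  ultimately show ?thesis
    by (simp add: norm_divide norm_mult)
qed

section \<open>The kernel\<close>

definition counterterm_range :: "nat \<Rightarrow> int \<Rightarrow> int set" where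
  "counterterm_range K A = {m. 0 \<le> m \<and> real_of_int m < real_of_int \<bar>A\<bar> / (2 * real K)}"

lemma finite_counterterm_range: "finite (counterterm_range K A)"
proof -
  have "counterterm_range K A \<subseteq> {0..\<bar>A\<bar>}"
  proof (cases "K = 0")
    case False
    then have "real_of_int \<bar>A\<bar> / (2 * real K) \<le> real_of_int \<bar>A\<bar>"
      by (simp add: divide_le_eq mult_le_cancel_left1)
    then show ?thesis
      by (auto simp: counterterm_range_def)
  qed (auto simp: counterterm_range_def)
  then show ?thesis
    using finite_subset by blast
qed

lemma counterterm_range_uminus [simp]: "counterterm_range K (- A) = counterterm_range K A"
  by (simp add: counterterm_range_def)

lemma counterterm_range_iff:
  assumes "K > 0"
  shows "m \<in> counterterm_range K A \<longleftrightarrow> 0 \<le> m \<and> 2 * int K * m < \<bar>A\<bar>"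
proof -
  have "real_of_int m < real_of_int \<bar>A\<bar> / (2 * real K) \<longleftrightarrow>
      real_of_int (2 * int K * m) < real_of_int \<bar>A\<bar>"
    using assms by (simp add: field_simps)
  then show ?thesis
    unfolding counterterm_range_def of_int_less_iff by simp
qed

lemma counterterm_range_pos:
  assumes "A > 0" "K > 0"
  defines "M \<equiv> nat \<lceil>real_of_int A / (2 * real K)\<rceil>"
  shows "counterterm_range K A = int ` {..<M}" and "A \<le> 2 * int K * int M" and "M \<ge> 1"
proof -
  define x where "x = real_of_int A / (2 * real K)"
  have "0 < x"
    using assms by (simp add: x_def)
  then have M: "int M = \<lceil>x\<rceil>"
    by (simp add: M_def x_def)
  have "1 \<le> \<lceil>x\<rceil>"
    using \<open>0 < x\<close> by simp
  with M show "M \<ge> 1"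
    by linarith
  have "m \<in> counterterm_range K A \<longleftrightarrow> 0 \<le> m \<and> m < int M" for m
    unfolding M less_ceiling_iff using assms(1) by (simp add: counterterm_range_def x_def)
  then have "counterterm_range K A = {0..<int M}"
    by (intro set_eqI) (simp only: atLeastLessThan_iff)
  then show "counterterm_range K A = int ` {..<M}"
    by (simp add: image_atLeastZeroLessThan_int)
  have "x \<le> of_int (int M)"
    unfolding M by (rule le_of_int_ceiling)
  then have "real_of_int A \<le> real_of_int (2 * int K * int M)"
    using assms(2) by (simp add: x_def divide_le_eq mult.commute)
  then show "A \<le> 2 * int K * int M"
    by (simp only: of_int_le_iff)
qed

text \<open>The weights \<open>1 / sigma_m j\<close> are the first \<open>M\<close> Taylor coefficients of
  \<open>- (u + 1) / (u - 1) / 2 = (1 + 2u + 2u\<^sup>2 + \<dots>) / 2\<close> at \<open>u = 0\<close>.\<close>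

lemma sum_sigma_geometric:
  fixes u :: complex
  assumes "u \<noteq> 1" "M \<ge> 1"
  shows "(u + 1) / (u - 1) + 2 * (\<Sum>j<M. 1 / sigma_m (int j) * u ^ j) = 2 * u ^ M / (u - 1)"
  using assms(2)
proof (induction M rule: dec_induct)
  case base
  then show ?case
    using assms(1) by (simp add: sigma_m_def field_simps)
next
  case (step M)
  then have "(u + 1) / (u - 1) + 2 * (\<Sum>j<Suc M. 1 / sigma_m (int j) * u ^ j) =
      2 * u ^ M / (u - 1) + 2 * u ^ M"
    by (simp add: sigma_m_def algebra_simps)
  also have "\<dots> = 2 * u ^ Suc M / (u - 1)"
    using assms(1) by (simp add: field_simps)
  finally show ?case .
qed

definition counterterm_exp :: "nat \<Rightarrow> int \<Rightarrow> int \<Rightarrow> complex \<Rightarrow> complex" where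
  "counterterm_exp K A m w =
     exp (2 * of_real pi * \<i> * w * of_int (sgn A) * of_int (2 * int K * m - \<bar>A\<bar>))"

definition counterterm :: "nat \<Rightarrow> int \<Rightarrow> complex \<Rightarrow> complex" where
  "counterterm K A w = (\<Sum>m\<in>counterterm_range K A. 1 / sigma_m m * counterterm_exp K A m w)"

definition exp_cot :: "nat \<Rightarrow> int \<Rightarrow> complex \<Rightarrow> complex" where
  "exp_cot K A w = exp (- (2 * of_real pi * \<i> * of_int A * w)) * cot (2 * of_real pi * of_nat K * w)"

definition verlinde_kernel :: "nat \<Rightarrow> nat \<Rightarrow> int \<Rightarrow> complex \<Rightarrow> complex" where
  "verlinde_kernel K p A w =
     (exp_cot K A w + 2 * \<i> * of_int (sgn A) * counterterm K A w) / sin_power p w"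

lemma exp_cot_holomorphic: "K > 0 \<Longrightarrow> exp_cot K A holomorphic_on - half_lattice K"
  unfolding exp_cot_def cot_def using sin_2pi_mult_eq_0_iff
  by (intro holomorphic_intros) auto

lemma counterterm_holomorphic: "counterterm K A holomorphic_on S"
  unfolding counterterm_def counterterm_exp_def by (intro holomorphic_intros)

lemma verlinde_kernel_holomorphic:
  assumes "K > 0"
  shows "verlinde_kernel K p A holomorphic_on - half_lattice K"
proof -
  have "(\<lambda>w. exp_cot K A w + 2 * \<i> * of_int (sgn A) * counterterm K A w) holomorphic_on - half_lattice K"
    using exp_cot_holomorphic[OF assms] counterterm_holomorphic by (intro holomorphic_intros)
  from holomorphic_on_div_sin_power[OF assms this] show ?thesis
    unfolding verlinde_kernel_def .
qed

lemma verlinde_kernel_periodic: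
  assumes "even (A + int p)"
  shows "verlinde_kernel K p A (w + 1/2) = verlinde_kernel K p A w"
proof -
  define \<epsilon> :: complex where "\<epsilon> = (-1) ^ p"
  have \<epsilon>: "exp (of_real pi * \<i> * of_int k) = \<epsilon>" if "even (k + A)" for k
    using that assms by (simp add: exp_pi_i_int \<epsilon>_def)
  have "exp (- (2 * of_real pi * \<i> * of_int A * (w + 1/2))) =
      exp (- (2 * of_real pi * \<i> * of_int A * w)) * exp (of_real pi * \<i> * of_int (- A))"
    by (simp add: algebra_simps flip: exp_add)
  moreover have "cot (2 * of_real pi * of_nat K * (w + 1/2)) =
      cot (2 * of_real pi * of_nat K * w + of_nat K * of_real pi)"
    by (simp add: algebra_simps)
  ultimately have exp_cot: "exp_cot K A (w + 1/2) = \<epsilon> * exp_cot K A w"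
    using \<epsilon>[of "- A"] by (simp add: exp_cot_def cot_add_nat_pi)
  have summand: "of_int (sgn A) * (1 / sigma_m m * counterterm_exp K A m (w + 1/2)) =
      \<epsilon> * (of_int (sgn A) * (1 / sigma_m m * counterterm_exp K A m w))" for m
  proof (cases "A = 0")
    case False
    define k where "k = sgn A * (2 * int K * m - \<bar>A\<bar>)"
    have "even (k + A)"
      using False unfolding k_def by (cases "A > 0") (auto simp: sgn_if)
    moreover have "counterterm_exp K A m (w + 1/2) =
        counterterm_exp K A m w * exp (of_real pi * \<i> * of_int k)"
      by (simp add: counterterm_exp_def k_def algebra_simps flip: exp_add)
    ultimately show ?thesis
      using \<epsilon> by (simp add: mult_ac)
  qed simp
  have counterterm: "of_int (sgn A) * counterterm K A (w + 1/2) =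
      \<epsilon> * (of_int (sgn A) * counterterm K A w)"
    by (simp only: counterterm_def sum_distrib_left summand)
  have "verlinde_kernel K p A (w + 1/2) =
      (\<epsilon> * (exp_cot K A w + 2 * \<i> * (of_int (sgn A) * counterterm K A w))) / (\<epsilon> * sin_power p w)"
    unfolding verlinde_kernel_def sin_power_add_half mult.assoc[of "2 * \<i>"] exp_cot counterterm
      \<epsilon>_def[symmetric] by (simp only: distrib_left mult.left_commute)
  also have "\<dots> = verlinde_kernel K p A w"
    by (simp add: verlinde_kernel_def \<epsilon>_def mult.assoc)
  finally show ?thesis .
qed

lemma verlinde_kernel_uminus:
  "verlinde_kernel K p A (- w) = - ((-1) ^ p * verlinde_kernel K p (- A) w)"
proof -
  have "exp_cot K A (- w) = - exp_cot K (- A) w"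
    by (simp add: exp_cot_def)
  moreover have "counterterm K A (- w) = counterterm K (- A) w"
    by (simp add: counterterm_def counterterm_exp_def sgn_if)
  ultimately have numerator:
    "exp_cot K A (- w) + 2 * \<i> * of_int (sgn A) * counterterm K A (- w) =
      - (exp_cot K (- A) w + 2 * \<i> * of_int (sgn (- A)) * counterterm K (- A) w)"
    by (simp add: sgn_minus algebra_simps)
  have "inverse ((-1 :: complex) ^ p) = (-1) ^ p"
    by (metis inverse_minus_eq inverse_1 power_inverse)
  then show ?thesis
    unfolding verlinde_kernel_def sin_power_uminus numerator
    by (simp add: divide_inverse inverse_mult_distrib algebra_simps)
qed

text \<open>With \<open>u = exp (4 pi i K w)\<close>, which is small in the upper half-plane, the counterterm
  removes exactly the modes \<open>exp (-2 pi i A w) u\<^sup>j\<close>, \<open>j < M\<close>, of \<open>exp_cot\<close> that are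
  unbounded there.\<close>

lemma exp_cot_add_counterterm_pos:
  fixes K :: nat and A :: int and w :: complex
  defines "u \<equiv> exp (2 * \<i> * (2 * of_real pi * of_nat K * w))"
    and "M \<equiv> nat \<lceil>real_of_int A / (2 * real K)\<rceil>"
  assumes "A > 0" "K > 0" "u \<noteq> 1"
  shows "exp_cot K A w + 2 * \<i> * counterterm K A w =
           2 * \<i> * (exp (- (2 * of_real pi * \<i> * of_int A * w)) * u ^ M) / (u - 1)"
proof -
  define e where "e = exp (- (2 * of_real pi * \<i> * of_int A * w))"
  have range: "counterterm_range K A = int ` {..<M}" and "M \<ge> 1"
    using counterterm_range_pos[OF assms(3,4)] by (simp_all add: M_def)
  have "counterterm_exp K A (int j) w = e * u ^ j" for j
  proof -
    have "2 * of_real pi * \<i> * w * of_int (sgn A) * of_int (2 * int K * int j - \<bar>A\<bar>) =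
        - (2 * of_real pi * \<i> * of_int A * w) + of_nat j * (2 * \<i> * (2 * of_real pi * of_nat K * w))"
      using assms(3) by (simp add: algebra_simps)
    then show ?thesis
      by (simp only: counterterm_exp_def exp_add exp_of_nat_mult e_def u_def)
  qed
  then have "counterterm K A w = e * (\<Sum>j<M. 1 / sigma_m (int j) * u ^ j)"
    by (simp add: counterterm_def range sum.reindex sum_distrib_left mult_ac)
  moreover have "exp_cot K A w = e * (\<i> * (u + 1) / (u - 1))"
    by (simp add: exp_cot_def e_def u_def cot_conv_exp)
  ultimately have "exp_cot K A w + 2 * \<i> * counterterm K A w =
      \<i> * e * ((u + 1) / (u - 1) + 2 * (\<Sum>j<M. 1 / sigma_m (int j) * u ^ j))"
    by (simp add: algebra_simps)
  also have "\<dots> = 2 * \<i> * (e * u ^ M) / (u - 1)"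
    unfolding sum_sigma_geometric[OF assms(5) \<open>M \<ge> 1\<close>] by simp
  finally show ?thesis
    by (simp add: e_def)
qed

lemma norm_exp_cot_add_counterterm_pos_le:
  assumes "A > 0" "K > 0" "Im w \<ge> 1"
  shows "norm (exp_cot K A w + 2 * \<i> * counterterm K A w) \<le> 4"
proof -
  define u where "u = exp (2 * \<i> * (2 * of_real pi * of_nat K * w))"
  define M where "M = nat \<lceil>real_of_int A / (2 * real K)\<rceil>"
  have "norm u \<le> 1/2"
    unfolding u_def by (rule norm_exp_4piKw_le[OF assms(2,3)])
  then have "u \<noteq> 1" and u1: "1/2 \<le> norm (u - 1)"
    using norm_triangle_ineq2[of 1 u] by (auto simp: norm_minus_commute)
  have "real_of_int A \<le> real_of_int (2 * int K * int M)"
    using counterterm_range_pos(2)[OF assms(1,2)] unfolding M_def of_int_le_iff .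
  then have "2 * pi * Im w * (real_of_int A - 2 * real K * real M) \<le> 0"
    using assms(3) by (intro mult_nonneg_nonpos) auto
  moreover have "norm (exp (- (2 * of_real pi * \<i> * of_int A * w)) * u ^ M) =
      exp (2 * pi * Im w * (real_of_int A - 2 * real K * real M))"
    by (simp add: u_def norm_mult norm_power norm_exp_eq_Re algebra_simps flip: exp_of_nat_mult exp_add)
  ultimately have "norm (exp (- (2 * of_real pi * \<i> * of_int A * w)) * u ^ M) \<le> 1"
    by simp
  then have "2 * norm (exp (- (2 * of_real pi * \<i> * of_int A * w)) * u ^ M) / norm (u - 1) \<le> 2 * 1 / (1/2)"
    using u1 by (intro frac_le) auto
  then show ?thesis
    using exp_cot_add_counterterm_pos[OF assms(1,2) \<open>u \<noteq> 1\<close>[unfolded u_def]]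
    by (simp add: norm_mult norm_divide u_def M_def)
qed

lemma norm_counterterm_le:
  assumes "A \<le> 0" "K > 0" "Im w \<ge> 0"
  shows "norm (counterterm K A w) \<le> card (counterterm_range K A)"
proof -
  have exp_le: "norm (counterterm_exp K A m w) \<le> 1" if "m \<in> counterterm_range K A" for m
  proof -
    have "2 * int K * m - \<bar>A\<bar> \<le> 0"
      using that counterterm_range_iff[OF assms(2)] by auto
    then have "real_of_int (2 * int K * m - \<bar>A\<bar>) \<le> 0"
      by (simp only: of_int_le_0_iff)
    moreover have "0 \<le> 2 * pi * Im w"
      using assms(3) by simp
    ultimately have "2 * pi * Im w * real_of_int (2 * int K * m - \<bar>A\<bar>) \<le> 0"
      by (simp only: mult_nonneg_nonpos)
    then show ?thesis
      using assms(1) by (cases "A = 0") (simp_all add: counterterm_exp_def norm_exp_eq_Re)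
  qed
  have "norm (counterterm K A w) \<le> (\<Sum>m\<in>counterterm_range K A. 1)"
    unfolding counterterm_def
  proof (intro sum_norm_le)
    fix m assume "m \<in> counterterm_range K A"
    moreover have "norm (1 / sigma_m m) \<le> 1"
      by (simp add: sigma_m_def)
    ultimately show "norm (1 / sigma_m m * counterterm_exp K A m w) \<le> 1"
      using exp_le unfolding norm_mult by (metis mult_le_one norm_ge_zero)
  qed
  then show ?thesis
    by simp
qed

lemma norm_kernel_numerator_le:
  assumes "K > 0" "Im w \<ge> 1"
  shows "norm (exp_cot K A w + 2 * \<i> * of_int (sgn A) * counterterm K A w)
           \<le> 4 + 2 * real (card (counterterm_range K A))"
proof (cases "A > 0")
  case True
  then show ?thesis
    using norm_exp_cot_add_counterterm_pos_le[OF True assms] by simp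
next
  case False
  have "2 * pi * of_int A * Im w \<le> 0"
    using False assms(2) by (intro mult_nonpos_nonneg mult_nonneg_nonpos) auto
  then have "norm (exp (- (2 * of_real pi * \<i> * of_int A * w))) \<le> 1"
    by (simp add: norm_exp_eq_Re)
  then have "norm (exp_cot K A w) \<le> 1 * 3"
    unfolding exp_cot_def norm_mult using norm_cot_2piKw_le[OF assms] by (intro mult_mono) auto
  moreover have "norm (2 * \<i> * of_int (sgn A) * counterterm K A w) \<le> 2 * real (card (counterterm_range K A))"
    using norm_counterterm_le[of A K w] False assms by (auto simp: norm_mult sgn_if)
  ultimately show ?thesis
    using norm_triangle_ineq[of "exp_cot K A w" "2 * \<i> * of_int (sgn A) * counterterm K A w"] by simp
qed

lemma norm_verlinde_kernel_le:
  assumes "K > 0" "p \<ge> 1" "1 \<le> \<bar>Im w\<bar>"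
  shows "norm (verlinde_kernel K p A w)
           \<le> (4 + 2 * real (card (counterterm_range K A))) * 4 ^ p * exp (- 2 * pi * \<bar>Im w\<bar>)"
proof -
  have upper: "norm (verlinde_kernel K p A w)
      \<le> (4 + 2 * real (card (counterterm_range K A))) * 4 ^ p * exp (- 2 * pi * Im w)"
    if "Im w \<ge> 1" for A w
  proof -
    have "norm (verlinde_kernel K p A w) \<le>
        norm (exp_cot K A w + 2 * \<i> * of_int (sgn A) * counterterm K A w) * 4 ^ p * exp (- 2 * pi * Im w)"
      unfolding verlinde_kernel_def by (rule norm_div_sin_power_le[OF that assms(2)])
    also have "\<dots> \<le> (4 + 2 * real (card (counterterm_range K A))) * 4 ^ p * exp (- 2 * pi * Im w)"
      using norm_kernel_numerator_le[OF assms(1) that] by (intro mult_right_mono) auto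
    finally show ?thesis .
  qed
  show ?thesis
  proof (cases "Im w \<ge> 1")
    case True
    then show ?thesis
      using upper by simp
  next
    case False
    then have "Im (- w) \<ge> 1"
      using assms(3) by simp
    moreover have "norm (verlinde_kernel K p A w) = norm (verlinde_kernel K p (- A) (- w))"
      using verlinde_kernel_uminus[of K p A "- w"] by (simp add: norm_mult norm_power)
    ultimately show ?thesis
      using upper[of "- w" "- A"] False assms(3) by simp
  qed
qed

section \<open>Residues of the kernel\<close>

definition counterterm_residue :: "nat \<Rightarrow> nat \<Rightarrow> int \<Rightarrow> complex" where
  "counterterm_residue K p A =
     (\<Sum>m\<in>counterterm_range K A. 1 / sigma_m m * residue (\<lambda>w. counterterm_exp K A m w / sin_power p w) 0)"

lemma residue_verlinde_kernel_0:
  assumes "K > 0"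
  shows "residue (verlinde_kernel K p A) 0 =
           residue (\<lambda>w. exp_cot K A w / sin_power p w) 0 + 2 * \<i> * of_int (sgn A) * counterterm_residue K p A"
proof -
  define B where "B = ball (0::complex) (1 / (2 * real K))"
  have "open B" "0 \<in> B"
    using assms by (auto simp: B_def)
  have holo: "f holomorphic_on B - {0}" if "f holomorphic_on - half_lattice K" for f
    using that punctured_ball_subset_Compl_half_lattice[OF assms, of 0]
    by (auto simp: B_def elim: holomorphic_on_subset)
  have exp_cot: "(\<lambda>w. exp_cot K A w / sin_power p w) holomorphic_on B - {0}"
    by (intro holo holomorphic_on_div_sin_power assms exp_cot_holomorphic)
  have counterterm_exp: "(\<lambda>w. counterterm_exp K A m w / sin_power p w) holomorphic_on B - {0}" for m
    unfolding counterterm_exp_def by (intro holo holomorphic_on_div_sin_power assms holomorphic_intros)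
  define c where "c m = 2 * \<i> * of_int (sgn A) / sigma_m m" for m
  have sum: "(\<lambda>w. \<Sum>m\<in>counterterm_range K A. c m * (counterterm_exp K A m w / sin_power p w)) holomorphic_on B - {0}"
    by (intro holomorphic_on_sum holomorphic_on_mult[OF holomorphic_on_const counterterm_exp])
  have "verlinde_kernel K p A = (\<lambda>w. exp_cot K A w / sin_power p w +
      (\<Sum>m\<in>counterterm_range K A. c m * (counterterm_exp K A m w / sin_power p w)))"
    by (simp add: fun_eq_iff verlinde_kernel_def counterterm_def c_def add_divide_distrib
        sum_divide_distrib sum_distrib_left)
  then have "residue (verlinde_kernel K p A) 0 = residue (\<lambda>w. exp_cot K A w / sin_power p w) 0 +
      residue (\<lambda>w. \<Sum>m\<in>counterterm_range K A. c m * (counterterm_exp K A m w / sin_power p w)) 0"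
    using residue_add[OF \<open>open B\<close> \<open>0 \<in> B\<close> exp_cot sum] by simp
  also have "residue (\<lambda>w. \<Sum>m\<in>counterterm_range K A. c m * (counterterm_exp K A m w / sin_power p w)) 0 =
      (\<Sum>m\<in>counterterm_range K A. c m * residue (\<lambda>w. counterterm_exp K A m w / sin_power p w) 0)"
    by (rule residue_sum[OF \<open>open B\<close> \<open>0 \<in> B\<close> finite_counterterm_range counterterm_exp])
  finally show ?thesis
    by (simp add: counterterm_residue_def c_def sum_distrib_left)
qed

lemma residue_verlinde_kernel_pole:
  assumes "K > 0" "0 < \<beta>" "\<beta> < K"
  defines "z \<equiv> of_nat \<beta> / (2 * of_nat K) :: complex"
  shows "residue (verlinde_kernel K p A) z =
           exp (- (2 * of_real pi * \<i> * of_int A * z)) / (2 * of_real pi * of_nat K * sin_power p z)"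
proof -
  define B where "B = ball z (1 / (2 * real K))"
  have "open B" "connected B" "z \<in> B"
    using assms(1) by (auto simp: B_def)
  have S: "sin_power p w \<noteq> 0" if "w \<in> B" for w
    using sin_power_neq_0_near_pole[OF assms(1-3)] that by (simp add: B_def z_def)
  define c :: complex where "c = 2 * of_real pi * of_nat K"
  define f where "f w = exp (- (2 * of_real pi * \<i> * of_int A * w)) / sin_power p w" for w
  have f: "f holomorphic_on B"
    unfolding f_def using S
    by (intro holomorphic_intros holomorphic_on_divide) (auto simp: sin_power_def intro!: holomorphic_intros)
  have counterterm: "(\<lambda>w. 2 * \<i> * of_int (sgn A) * counterterm K A w / sin_power p w) holomorphic_on B"
    using S counterterm_holomorphic by (intro holomorphic_intros holomorphic_on_divide)
      (auto simp: sin_power_def intro!: holomorphic_intros)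
  have "c * z = of_real (real \<beta> * pi)"
    using assms(1) by (simp add: c_def z_def)
  then have sin_cz: "sin (c * z) = 0"
    by (simp add: sin_of_real)
  have "B \<inter> half_lattice K = {z}"
    using ball_inter_half_lattice[OF assms(1), of "int \<beta>"] by (simp add: B_def z_def)
  then have "sin (c * w) \<noteq> 0" if "w \<in> B - {z}" for w
    using that sin_2pi_mult_eq_0_iff[OF assms(1), of w] by (auto simp: c_def mult.assoc)
  then have "(\<lambda>w. f w * cot (c * w)) holomorphic_on B - {z}"
    using f unfolding cot_def by (intro holomorphic_intros) (auto elim: holomorphic_on_subset)
  moreover have "verlinde_kernel K p A =
      (\<lambda>w. f w * cot (c * w) + 2 * \<i> * of_int (sgn A) * counterterm K A w / sin_power p w)"
    by (simp add: fun_eq_iff verlinde_kernel_def exp_cot_def f_def c_def add_divide_distrib)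
  ultimately have "residue (verlinde_kernel K p A) z =
      residue (\<lambda>w. f w * cot (c * w)) z + residue (\<lambda>w. 2 * \<i> * of_int (sgn A) * counterterm K A w / sin_power p w) z"
    using residue_add[OF \<open>open B\<close> \<open>z \<in> B\<close> _ holomorphic_on_subset[OF counterterm Diff_subset]] by simp
  also have "residue (\<lambda>w. 2 * \<i> * of_int (sgn A) * counterterm K A w / sin_power p w) z = 0"
    by (rule residue_holo[OF \<open>open B\<close> \<open>z \<in> B\<close> counterterm])
  also have "residue (\<lambda>w. f w * cot (c * w)) z = f z / c"
    using residue_mult_cot[OF \<open>open B\<close> \<open>connected B\<close> \<open>z \<in> B\<close> f] S[OF \<open>z \<in> B\<close>] sin_cz assms(1)
    by (simp add: f_def c_def)
  finally show ?thesis
    by (simp add: f_def c_def)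
qed

lemma sum_residues_verlinde_kernel:
  assumes "K > 0" "p \<ge> 1" "even (A + int p)"
  shows "(\<Sum>k<K. residue (verlinde_kernel K p A) (of_nat k / (2 * of_nat K))) = 0"
proof -
  define pt :: "nat \<Rightarrow> complex" where "pt k = of_nat k / (2 * of_nat K)" for k
  define S where "S = {w. - 1 / (2 * real K) < Re w} \<inter> {w. Re w < 1/2}"
  define C where "C = (4 + 2 * real (card (counterterm_range K A))) * 4 ^ p"
  have "real K > 0"
    using assms(1) by simp
  \<comment> \<open>The period strip \<open>-1/(4K) \<le> Re w \<le> 1/2 - 1/(4K)\<close> contains the poles \<open>pt k\<close>, \<open>k < K\<close>.\<close>
  have "(\<Sum>q\<in>pt ` {..<K}. residue (verlinde_kernel K p A) q) = 0"
  proof (rule residue_sum_eq_0_if_periodic_decaying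
      [where T = "1/2" and S = S and a = "- 1 / (4 * real K)" and Y\<^sub>0 = 1 and B = "\<lambda>y. C * exp (- 2 * pi * y)"])
    show "open S" "convex S"
      unfolding S_def
      by (intro open_Int open_halfspace_Re_gt open_halfspace_Re_lt
          convex_Int convex_halfspace_Re_gt convex_halfspace_Re_lt)+
    have "S - pt ` {..<K} \<subseteq> - half_lattice K"
      using half_lattice_in_strip[OF assms(1)] by (force simp: S_def pt_def)
    then show "verlinde_kernel K p A holomorphic_on S - pt ` {..<K}"
      by (rule holomorphic_on_subset[OF verlinde_kernel_holomorphic[OF assms(1)]])
    have "- 1 / (2 * real K) < - 1 / (4 * real K)" "- 1 / (4 * real K) < 0"
      using \<open>real K > 0\<close> by (simp_all add: field_simps)
    then show "w \<in> S" if "- 1 / (4 * real K) \<le> Re w" "Re w \<le> - 1 / (4 * real K) + 1/2" for w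
      unfolding S_def Int_iff mem_Collect_eq using that by linarith
    show "- 1 / (4 * real K) < Re q \<and> Re q < - 1 / (4 * real K) + 1/2 \<and> \<bar>Im q\<bar> < 1"
      if "q \<in> pt ` {..<K}" for q
      using that \<open>real K > 0\<close> by (auto simp: pt_def field_simps)
    show "verlinde_kernel K p A (w + of_real (1/2)) = verlinde_kernel K p A w" for w
      using verlinde_kernel_periodic[OF assms(3)] by simp
    show "norm (verlinde_kernel K p A w) \<le> C * exp (- 2 * pi * \<bar>Im w\<bar>)" if "1 \<le> \<bar>Im w\<bar>" for w
      using norm_verlinde_kernel_le[OF assms(1,2) that] by (simp add: C_def)
    show "((\<lambda>y. C * exp (- 2 * pi * y)) \<longlongrightarrow> 0) at_top"
      by real_asymp
  qed simp_all
  moreover have "(\<Sum>q\<in>pt ` {..<K}. residue (verlinde_kernel K p A) q) =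
      (\<Sum>k<K. residue (verlinde_kernel K p A) (pt k))"
    by (rule sum.reindex_cong[OF _ refl refl]) (auto simp: inj_on_def pt_def)
  ultimately show ?thesis
    by (simp add: pt_def)
qed

definition verlinde_pole_sum :: "nat \<Rightarrow> nat \<Rightarrow> int \<Rightarrow> complex" where
  "verlinde_pole_sum K p A = (\<Sum>\<beta>\<in>{1..<K}.
     exp (- (2 * of_real pi * \<i> * of_int A * (of_nat \<beta> / (2 * of_nat K)))) / sin_power p (of_nat \<beta> / (2 * of_nat K)))"

lemma residue_exp_cot_add_counterterm_residue:
  assumes "K > 0" "p \<ge> 1" "even (A + int p)"
  shows "residue (\<lambda>w. exp_cot K A w / sin_power p w) 0 + 2 * \<i> * of_int (sgn A) * counterterm_residue K p A =
    - verlinde_pole_sum K p A / (2 * of_real pi * of_nat K)"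
proof -
  have "{..<K} = insert 0 {1..<K}"
    using assms(1) by auto
  then have "0 = residue (verlinde_kernel K p A) 0 +
      (\<Sum>\<beta>\<in>{1..<K}. residue (verlinde_kernel K p A) (of_nat \<beta> / (2 * of_nat K)))"
    using sum_residues_verlinde_kernel[OF assms] by simp
  also have "(\<Sum>\<beta>\<in>{1..<K}. residue (verlinde_kernel K p A) (of_nat \<beta> / (2 * of_nat K))) =
      verlinde_pole_sum K p A / (2 * of_real pi * of_nat K)"
    unfolding verlinde_pole_sum_def sum_divide_distrib
  proof (intro sum.cong refl)
    fix \<beta> assume "\<beta> \<in> {1..<K}"
    then have "0 < \<beta>" "\<beta> < K"
      by auto
    show "residue (verlinde_kernel K p A) (of_nat \<beta> / (2 * of_nat K)) =
        exp (- (2 * of_real pi * \<i> * of_int A * (of_nat \<beta> / (2 * of_nat K)))) /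
          sin_power p (of_nat \<beta> / (2 * of_nat K)) / (2 * of_real pi * of_nat K)"
      unfolding residue_verlinde_kernel_pole[OF assms(1) \<open>0 < \<beta>\<close> \<open>\<beta> < K\<close>]
      by (simp add: mult.commute)
  qed
  finally show ?thesis
    using residue_verlinde_kernel_0[OF assms(1)] by (simp add: eq_neg_iff_add_eq_0 add.commute)
qed

section \<open>Verlinde numbers\<close>

lemma prod_sin_2pi_eq_sum_sign_vectors:
  "(\<Prod>j<n. sin (2 * of_real pi * of_nat (\<alpha> j) * \<phi>)) = (\<i> / 2) ^ n *
     (\<Sum>\<mu>\<in>{0..<n} \<rightarrow>\<^sub>E {-1, 1::int}. of_int (\<Prod>j<n. \<mu> j) *
        exp (- (2 * of_real pi * \<i> * of_int (\<Sum>j<n. \<mu> j * int (\<alpha> j)) * \<phi>)))"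
proof -
  have "\<i> * (\<Sum>j<n. of_int (\<mu> j) * (2 * of_real pi * of_nat (\<alpha> j) * \<phi>)) =
      2 * of_real pi * \<i> * of_int (\<Sum>j<n. \<mu> j * int (\<alpha> j)) * \<phi>" for \<mu> :: "nat \<Rightarrow> int"
    by (simp add: sum_distrib_left sum_distrib_right mult_ac)
  then show ?thesis
    by (simp only: prod_sin_eq_sum_sign_vectors)
qed

lemma of_real_verlinde_summand:
  assumes "K > 0"
  shows "complex_of_real ((\<Prod>j<n. sin (pi * real \<beta> * real (\<alpha> j) / real K)) / sin (pi * real \<beta> / real K) ^ p) =
    (\<Prod>j<n. sin (2 * of_real pi * of_nat (\<alpha> j) * (of_nat \<beta> / (2 * of_nat K)))) /
      sin_power p (of_nat \<beta> / (2 * of_nat K))"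
proof -
  have arg: "of_real (pi * real \<beta> * real (\<alpha> j) / real K) =
      2 * of_real pi * of_nat (\<alpha> j) * (of_nat \<beta> / (2 * of_nat K) :: complex)" for j
    using assms by (simp add: field_simps)
  have arg': "of_real (pi * real \<beta> / real K) = 2 * of_real pi * (of_nat \<beta> / (2 * of_nat K) :: complex)"
    using assms by (simp add: field_simps)
  have "complex_of_real (\<Prod>j<n. sin (pi * real \<beta> * real (\<alpha> j) / real K)) =
      (\<Prod>j<n. sin (2 * of_real pi * of_nat (\<alpha> j) * (of_nat \<beta> / (2 * of_nat K))))"
    by (simp only: of_real_prod arg flip: sin_of_real)
  moreover have "complex_of_real (sin (pi * real \<beta> / real K) ^ p) = sin_power p (of_nat \<beta> / (2 * of_nat K))"
    by (simp only: of_real_power arg' sin_power_def flip: sin_of_real)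
  ultimately show ?thesis
    by (simp only: of_real_divide)
qed

lemma verlinde_sum_eq_sum_sign_vectors:
  assumes "K > 0"
  shows "complex_of_real (\<Sum>\<beta> = 1..K - 1.
      (\<Prod>j<n. sin (pi * real \<beta> * real (\<alpha> j) / real K)) / sin (pi * real \<beta> / real K) ^ p) =
    (\<i> / 2) ^ n * (\<Sum>\<mu>\<in>{0..<n} \<rightarrow>\<^sub>E {-1, 1::int}. of_int (\<Prod>j<n. \<mu> j) *
      verlinde_pole_sum K p (\<Sum>j<n. \<mu> j * int (\<alpha> j)))"
proof -
  let ?P = "{0..<n} \<rightarrow>\<^sub>E {-1, 1::int}"
  let ?c = "\<lambda>\<mu>. of_int (\<Prod>j<n. \<mu> j) :: complex"
  let ?e = "\<lambda>\<mu> \<beta>. exp (- (2 * of_real pi * \<i> * of_int (\<Sum>j<n. \<mu> j * int (\<alpha> j)) * (of_nat \<beta> / (2 * of_nat K))))"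
  let ?s = "\<lambda>\<beta>. sin_power p (of_nat \<beta> / (2 * of_nat K))"
  have summand: "complex_of_real ((\<Prod>j<n. sin (pi * real \<beta> * real (\<alpha> j) / real K)) /
      sin (pi * real \<beta> / real K) ^ p) = (\<i> / 2) ^ n * (\<Sum>\<mu>\<in>?P. ?c \<mu> * (?e \<mu> \<beta> / ?s \<beta>))" for \<beta>
    unfolding of_real_verlinde_summand[OF assms] prod_sin_2pi_eq_sum_sign_vectors
    by (simp only: times_divide_eq_right[symmetric] sum_divide_distrib)
  have "{1..K - 1} = {1..<K}"
    using assms by auto
  then have "complex_of_real (\<Sum>\<beta> = 1..K - 1.
      (\<Prod>j<n. sin (pi * real \<beta> * real (\<alpha> j) / real K)) / sin (pi * real \<beta> / real K) ^ p) =
      (\<i> / 2) ^ n * (\<Sum>\<beta>\<in>{1..<K}. \<Sum>\<mu>\<in>?P. ?c \<mu> * (?e \<mu> \<beta> / ?s \<beta>))"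
    by (simp only: of_real_sum summand sum_distrib_left)
  also have "\<dots> = (\<i> / 2) ^ n * (\<Sum>\<mu>\<in>?P. \<Sum>\<beta>\<in>{1..<K}. ?c \<mu> * (?e \<mu> \<beta> / ?s \<beta>))"
    by (subst sum.swap) (rule refl)
  finally show ?thesis
    by (simp only: sum_distrib_left verlinde_pole_sum_def)
qed

lemma residue_prod_sin_cot_eq_sum_sign_vectors:
  assumes "K > 0"
  shows "residue (\<lambda>\<phi>. (\<Prod>j<n. sin (2 * of_real pi * of_nat (\<alpha> j) * \<phi>)) / sin (2 * of_real pi * \<phi>) ^ p *
      cot (2 * of_real pi * of_nat K * \<phi>)) 0 =
    (\<i> / 2) ^ n * (\<Sum>\<mu>\<in>{0..<n} \<rightarrow>\<^sub>E {-1, 1::int}. of_int (\<Prod>j<n. \<mu> j) *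
      residue (\<lambda>w. exp_cot K (\<Sum>j<n. \<mu> j * int (\<alpha> j)) w / sin_power p w) 0)"
    (is "_ = (\<i> / 2) ^ n * (\<Sum>\<mu>\<in>?P. ?c \<mu> * residue (?f \<mu>) 0)")
proof -
  define B where "B = ball (0::complex) (1 / (2 * real K))"
  have "open B" "0 \<in> B"
    using assms by (auto simp: B_def)
  have "B - {0} \<subseteq> - half_lattice K"
    using punctured_ball_subset_Compl_half_lattice[OF assms, of 0] by (simp add: B_def)
  then have f: "?f \<mu> holomorphic_on B - {0}" for \<mu>
    by (rule holomorphic_on_subset[OF holomorphic_on_div_sin_power[OF assms exp_cot_holomorphic[OF assms]]])
  have "(\<lambda>\<phi>. (\<Prod>j<n. sin (2 * of_real pi * of_nat (\<alpha> j) * \<phi>)) / sin (2 * of_real pi * \<phi>) ^ p *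
      cot (2 * of_real pi * of_nat K * \<phi>)) = (\<lambda>w. \<Sum>\<mu>\<in>?P. ((\<i> / 2) ^ n * ?c \<mu>) * ?f \<mu> w)"
    (is "_ = ?sum")
    unfolding prod_sin_2pi_eq_sum_sign_vectors exp_cot_def sin_power_def
    by (simp add: fun_eq_iff sum_distrib_left sum_distrib_right sum_divide_distrib mult_ac)
  moreover have "residue ?sum 0 = (\<Sum>\<mu>\<in>?P. ((\<i> / 2) ^ n * ?c \<mu>) * residue (?f \<mu>) 0)"
    by (rule residue_sum[OF \<open>open B\<close> \<open>0 \<in> B\<close> _ f]) (simp add: finite_PiE)
  ultimately show ?thesis
    by (simp add: sum_distrib_left mult.assoc)
qed

lemma residue_formula_eq_pole_sums:
  assumes "K > 0" "p \<ge> 1" "even (p + (\<Sum>j<n. \<alpha> j))"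
  shows "residue (\<lambda>\<phi>. (\<Prod>j<n. sin (2 * of_real pi * of_nat (\<alpha> j) * \<phi>)) / sin (2 * of_real pi * \<phi>) ^ p *
          cot (2 * of_real pi * of_nat K * \<phi>)) 0
       - (\<i> / 2) ^ (n - 1) * (\<Sum>\<mu>\<in>{0..<n} \<rightarrow>\<^sub>E {-1, 1::int}.
           of_int (\<Prod>j<n. \<mu> j) * of_int (sgn (\<Sum>j<n. \<mu> j * int (\<alpha> j))) *
           counterterm_residue K p (\<Sum>j<n. \<mu> j * int (\<alpha> j))) =
    - ((\<i> / 2) ^ n * (\<Sum>\<mu>\<in>{0..<n} \<rightarrow>\<^sub>E {-1, 1::int}. of_int (\<Prod>j<n. \<mu> j) *
        verlinde_pole_sum K p (\<Sum>j<n. \<mu> j * int (\<alpha> j)))) / (2 * of_real pi * of_nat K)"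
proof -
  define P where "P = {0..<n} \<rightarrow>\<^sub>E {-1, 1::int}"
  define A where "A \<mu> = (\<Sum>j<n. \<mu> j * int (\<alpha> j))" for \<mu>
  define c :: "(nat \<Rightarrow> int) \<Rightarrow> complex" where "c \<mu> = of_int (\<Prod>j<n. \<mu> j)" for \<mu>
  define X where "X \<mu> = residue (\<lambda>w. exp_cot K (A \<mu>) w / sin_power p w) 0" for \<mu>
  define Y where "Y \<mu> = 2 * \<i> * of_int (sgn (A \<mu>)) * counterterm_residue K p (A \<mu>)" for \<mu>
  have identity: "X \<mu> + Y \<mu> = - verlinde_pole_sum K p (A \<mu>) / (2 * of_real pi * of_nat K)" if "\<mu> \<in> P" for \<mu>
  proof -
    have "even (A \<mu>) \<longleftrightarrow> even (\<Sum>j<n. int (\<alpha> j))"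
      unfolding A_def using that by (intro even_signed_sum_iff) (auto simp: P_def)
    then have "even (A \<mu> + int p)"
      using assms(3) by (simp flip: of_nat_sum)
    then show ?thesis
      using residue_exp_cot_add_counterterm_residue[OF assms(1,2)] by (simp add: X_def Y_def)
  qed
  \<comment> \<open>For \<open>n = 0\<close>, where \<open>n - 1\<close> truncates to 0, both sides vanish because \<open>A \<mu> = 0\<close>.\<close>
  have sign: "(\<i> / 2) ^ (n - 1) * (c \<mu> * of_int (sgn (A \<mu>)) * counterterm_residue K p (A \<mu>)) =
      - ((\<i> / 2) ^ n * (c \<mu> * Y \<mu>))" for \<mu>
  proof (cases n)
    case (Suc m)
    then show ?thesis
      by (simp add: Y_def field_simps)
  qed (simp add: A_def Y_def)
  have residue: "residue (\<lambda>\<phi>. (\<Prod>j<n. sin (2 * of_real pi * of_nat (\<alpha> j) * \<phi>)) / sin (2 * of_real pi * \<phi>) ^ p *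
      cot (2 * of_real pi * of_nat K * \<phi>)) 0 = (\<i> / 2) ^ n * (\<Sum>\<mu>\<in>P. c \<mu> * X \<mu>)"
    unfolding residue_prod_sin_cot_eq_sum_sign_vectors[OF assms(1)] P_def c_def X_def A_def ..
  have "residue (\<lambda>\<phi>. (\<Prod>j<n. sin (2 * of_real pi * of_nat (\<alpha> j) * \<phi>)) / sin (2 * of_real pi * \<phi>) ^ p *
          cot (2 * of_real pi * of_nat K * \<phi>)) 0
       - (\<i> / 2) ^ (n - 1) * (\<Sum>\<mu>\<in>P. c \<mu> * of_int (sgn (A \<mu>)) * counterterm_residue K p (A \<mu>)) =
      (\<i> / 2) ^ n * (\<Sum>\<mu>\<in>P. c \<mu> * (X \<mu> + Y \<mu>))"
    unfolding residue sum_distrib_left sign sum_negf by (simp add: distrib_left sum.distrib)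
  also have "\<dots> = - ((\<i> / 2) ^ n * (\<Sum>\<mu>\<in>P. c \<mu> * verlinde_pole_sum K p (A \<mu>))) / (2 * of_real pi * of_nat K)"
    using identity by (simp add: sum_distrib_left sum_divide_distrib sum_negf)
  finally show ?thesis
    by (simp only: P_def c_def A_def)
qed

lemma verlinde_eq_0_if_odd:
  assumes "K > 0" "odd (n + (\<Sum>j<n. \<alpha> j))"
  shows "verlinde K g n \<alpha> = 0"
proof -
  define f where "f \<beta> = (\<Prod>j<n. sin (pi * real \<beta> * real (\<alpha> j) / real K)) / sin (pi * real \<beta> / real K) ^ (n + 2 * g - 2)"
    for \<beta>
  have "f (K - \<beta>) = - f \<beta>" if "\<beta> < K" for \<beta>
  proof -
    have reflect: "pi * real (K - \<beta>) * a / real K = a * pi - pi * real \<beta> * a / real K" for a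
      using that assms(1) by (simp add: of_nat_diff field_simps)
    have "(\<Prod>j<n. sin (pi * real (K - \<beta>) * real (\<alpha> j) / real K)) =
        (\<Prod>j<n. (-1) ^ (\<alpha> j + 1) * sin (pi * real \<beta> * real (\<alpha> j) / real K))"
      by (simp add: reflect sin_diff)
    also have "\<dots> = (-1) ^ (\<Sum>j<n. \<alpha> j + 1) * (\<Prod>j<n. sin (pi * real \<beta> * real (\<alpha> j) / real K))"
      by (simp only: prod.distrib power_sum)
    also have "(\<Sum>j<n. \<alpha> j + 1) = n + (\<Sum>j<n. \<alpha> j)"
      by (subst sum.distrib) simp
    finally have "(\<Prod>j<n. sin (pi * real (K - \<beta>) * real (\<alpha> j) / real K)) =
        (-1) ^ (n + (\<Sum>j<n. \<alpha> j)) * (\<Prod>j<n. sin (pi * real \<beta> * real (\<alpha> j) / real K))" .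
    moreover have "sin (pi * real (K - \<beta>) / real K) = sin (pi * real \<beta> / real K)"
      using reflect[of 1] by (simp add: sin_diff)
    ultimately show ?thesis
      using assms(2) by (simp add: f_def)
  qed
  then have "(\<Sum>\<beta> = 1..K - 1. f (K - \<beta>)) = (\<Sum>\<beta> = 1..K - 1. - f \<beta>)"
    using assms(1) by (intro sum.cong) auto
  moreover have "(\<Sum>\<beta> = 1..K - 1. f (K - \<beta>)) = (\<Sum>\<beta> = 1..K - 1. f \<beta>)"
    by (rule sum.reindex_bij_witness[of _ "\<lambda>\<beta>. K - \<beta>" "\<lambda>\<beta>. K - \<beta>"]) auto
  ultimately have "(\<Sum>\<beta> = 1..K - 1. f \<beta>) = 0"
    by (simp add: sum_negf)
  then show ?thesis
    by (simp add: verlinde_def f_def)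
qed

lemma verlinde_eq_residue_formula:
  assumes "n + 2 * g > 2" "K > 0" "even (n + (\<Sum>j<n. \<alpha> j))"
  defines "p \<equiv> n + 2 * g - 2"
  shows "complex_of_real (verlinde K g n \<alpha>) =
    - 4 * of_real pi * of_real ((real K / 2) ^ g) *
      (residue (\<lambda>\<phi>. (\<Prod>j<n. sin (2 * of_real pi * of_nat (\<alpha> j) * \<phi>)) / sin (2 * of_real pi * \<phi>) ^ p *
          cot (2 * of_real pi * of_nat K * \<phi>)) 0
       - (\<i> / 2) ^ (n - 1) * (\<Sum>\<mu>\<in>{0..<n} \<rightarrow>\<^sub>E {-1, 1::int}.
           of_int (\<Prod>j<n. \<mu> j) * of_int (sgn (\<Sum>j<n. \<mu> j * int (\<alpha> j))) *
           counterterm_residue K p (\<Sum>j<n. \<mu> j * int (\<alpha> j))))"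
proof -
  have "p \<ge> 1" "even (p + (\<Sum>j<n. \<alpha> j))"
    using assms(1,3) by (simp_all add: p_def)
  have "(real K / 2) powi (int g - 1) = 4 * pi * (real K / 2) ^ g / (2 * pi * real K)"
    using assms(2) by (simp add: power_int_diff field_simps)
  then have coefficient: "complex_of_real ((real K / 2) powi (int g - 1)) =
      4 * of_real pi * of_real ((real K / 2) ^ g) / (2 * of_real pi * of_nat K)"
    by (simp only: of_real_divide of_real_mult of_real_numeral of_real_of_nat_eq)
  show ?thesis
    unfolding residue_formula_eq_pole_sums[OF assms(2) \<open>p \<ge> 1\<close> \<open>even (p + (\<Sum>j<n. \<alpha> j))\<close>]
      verlinde_def of_real_mult verlinde_sum_eq_sum_sign_vectors[OF assms(2)] coefficient
    using assms(2) by (simp add: p_def field_simps)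
qed

theorem proposition5p1p1:
  fixes g n K :: nat and \<alpha> :: "nat \<Rightarrow> nat"
  assumes "n + 2 * g > 2"
    and "K \<ge> 2"
    and "\<forall>j<n. 1 \<le> \<alpha> j \<and> \<alpha> j \<le> K - 1"
  shows "(odd (n + (\<Sum>j<n. \<alpha> j)) \<longrightarrow> verlinde K g n \<alpha> = 0) \<and>
    (even (n + (\<Sum>j<n. \<alpha> j)) \<longrightarrow>
      complex_of_real (verlinde K g n \<alpha>) =
        - 4 * complex_of_real pi * complex_of_real ((real K / 2) ^ g) *
        ( residue (\<lambda>\<phi>::complex.
              (\<Prod>j<n. sin (2 * complex_of_real pi * of_nat (\<alpha> j) * \<phi>)) /
              sin (2 * complex_of_real pi * \<phi>) ^ (n + 2 * g - 2) *
              cot (2 * complex_of_real pi * of_nat K * \<phi>)) 0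
          - (\<i> / 2) ^ (n - 1) *
            (\<Sum>\<mu> \<in> ({0..<n} \<rightarrow>\<^sub>E {-1, 1::int}).
              (let A = (\<Sum>j<n. \<mu> j * int (\<alpha> j)) in
              of_int (\<Prod>j<n. \<mu> j) * of_int (sgn A) *
              (\<Sum>m \<in> {m::int. 0 \<le> m \<and> real_of_int m < real_of_int \<bar>A\<bar> / (2 * real K)}.
                 1 / sigma_m m *
                 residue (\<lambda>\<phi>::complex.
                    exp (2 * complex_of_real pi * \<i> * \<phi> * of_int (sgn A)
                         * of_int (2 * int K * m - \<bar>A\<bar>)) /
                    sin (2 * complex_of_real pi * \<phi>) ^ (n + 2 * g - 2)) 0)))))"
proof -
  have "K > 0"
    using assms(2) by simp
  then show ?thesis
    using verlinde_eq_0_if_odd verlinde_eq_residue_formula[OF assms(1)]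
    unfolding counterterm_residue_def counterterm_range_def counterterm_exp_def sin_power_def Let_def
    by blast
qed

end
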